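(* For every binary matrix $A$, the base graph of $A$ is acyclic, both with respect to the binary setting and with respect to the boolean setting.
   Context: A set $X$ of $\{0,1\}$-vectors spans a vector $y$ in the binary (resp. boolean) sense if $y=\sum_{x\in X}c_xx$ with $c_x\in\{0,1\}$ using ordinary (resp. boolean, $1+1=1$) addition; $X$ spans a set $Y$ if it spans each vector of $Y$. A binary (resp. boolean) base of an $n\times m$ binary matrix $A$ is a set of $\{0,1\}$ column vectors of length $n$ spanning every column of $A$ in the corresponding sense, of minimum cardinality among such spanning sets. The base graph of $A$ (in the given setting) is the directed graph whose vertices are the bases of $A$, with a directed edge from a base $U$ to a different base $V$ whenever $U$ spans $V$. *)

theory Defs
  imports Main
begin

text \<open>Column vectors of length n with entries in {0,1} are represented as functions
  nat => nat that are 0/1-valued and vanish at indices >= n.\<close>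

definition zo_vec :: "nat \<Rightarrow> (nat \<Rightarrow> nat) \<Rightarrow> bool" where
  "zo_vec n x \<longleftrightarrow> (\<forall>i. x i \<in> {0,1}) \<and> (\<forall>i\<ge>n. x i = 0)"

definition bin_spans :: "(nat \<Rightarrow> nat) set \<Rightarrow> (nat \<Rightarrow> nat) \<Rightarrow> bool" where
  "bin_spans X y \<longleftrightarrow> (\<exists>S\<subseteq>X. finite S \<and> y = (\<lambda>i. \<Sum>x\<in>S. x i))"

text \<open>Boolean span: y is a boolean sum (1+1=1) of a subset of X.\<close>
definition bool_spans :: "(nat \<Rightarrow> nat) set \<Rightarrow> (nat \<Rightarrow> nat) \<Rightarrow> bool" where
  "bool_spans X y \<longleftrightarrow> (\<exists>S\<subseteq>X. finite S \<and> y = (\<lambda>i. if (\<exists>x\<in>S. x i = 1) then 1 else 0))"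

definition spans_set :: "((nat \<Rightarrow> nat) set \<Rightarrow> (nat \<Rightarrow> nat) \<Rightarrow> bool)
    \<Rightarrow> (nat \<Rightarrow> nat) set \<Rightarrow> (nat \<Rightarrow> nat) set \<Rightarrow> bool" where
  "spans_set sp X Y \<longleftrightarrow> (\<forall>y\<in>Y. sp X y)"

definition binary_matrix :: "nat \<Rightarrow> nat \<Rightarrow> (nat \<Rightarrow> nat \<Rightarrow> nat) \<Rightarrow> bool" where
  "binary_matrix n m A \<longleftrightarrow> (\<forall>i<n. \<forall>j<m. A i j \<in> {0,1})"

definition columns :: "nat \<Rightarrow> nat \<Rightarrow> (nat \<Rightarrow> nat \<Rightarrow> nat) \<Rightarrow> (nat \<Rightarrow> nat) set" where
  "columns n m A = {(\<lambda>i. if i < n then A i j else 0) | j. j < m}"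

definition spanning_set :: "((nat \<Rightarrow> nat) set \<Rightarrow> (nat \<Rightarrow> nat) \<Rightarrow> bool)
    \<Rightarrow> nat \<Rightarrow> nat \<Rightarrow> (nat \<Rightarrow> nat \<Rightarrow> nat) \<Rightarrow> (nat \<Rightarrow> nat) set \<Rightarrow> bool" where
  "spanning_set sp n m A U \<longleftrightarrow>
     finite U \<and> (\<forall>x\<in>U. zo_vec n x) \<and> spans_set sp U (columns n m A)"

definition is_base :: "((nat \<Rightarrow> nat) set \<Rightarrow> (nat \<Rightarrow> nat) \<Rightarrow> bool)
    \<Rightarrow> nat \<Rightarrow> nat \<Rightarrow> (nat \<Rightarrow> nat \<Rightarrow> nat) \<Rightarrow> (nat \<Rightarrow> nat) set \<Rightarrow> bool" where
  "is_base sp n m A U \<longleftrightarrow>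
     spanning_set sp n m A U \<and> (\<forall>V. spanning_set sp n m A V \<longrightarrow> card U \<le> card V)"

definition base_graph :: "((nat \<Rightarrow> nat) set \<Rightarrow> (nat \<Rightarrow> nat) \<Rightarrow> bool)
    \<Rightarrow> nat \<Rightarrow> nat \<Rightarrow> (nat \<Rightarrow> nat \<Rightarrow> nat) \<Rightarrow> ((nat \<Rightarrow> nat) set \<times> (nat \<Rightarrow> nat) set) set" where
  "base_graph sp n m A =
     {(U, V). is_base sp n m A U \<and> is_base sp n m A V \<and> U \<noteq> V \<and> spans_set sp U V}"

end

theory Submission
  imports Defs
begin

text \<open>Both spanning notions share three properties: a 0/1 vector in X is spanned by X;
  spanning is transitive; and if X spans y while a subset X' does not, then some element of
  X - X' lies coordinatewise below y. Let bases U and V span each other and u \<in> U. By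
  minimality of U, U - {u} does not span u. Hence neither does the part V' of V spanned by
  U - {u}, while V does, so some v \<in> V - V' lies below u; and U spans v while U - {u} does not,
  so u lies below v. Thus u = v \<in> V, and U = V by symmetry. Spanning between bases is
  transitive, so a cycle through an edge U \<rightarrow> V would make U and V span each other.\<close>

definition zero_one :: "(nat \<Rightarrow> nat) \<Rightarrow> bool" where
  "zero_one x \<longleftrightarrow> (\<forall>i. x i \<in> {0,1})"

lemma column_zero_one:
  assumes "binary_matrix n m A" and "c \<in> columns n m A"
  shows "zero_one c"
proof -
  obtain j where "j < m" "c = (\<lambda>i. if i < n then A i j else 0)"
    using assms(2) unfolding columns_def by blast
  then show ?thesis
    using assms(1) unfolding binary_matrix_def zero_one_def by auto
qed

locale span_operator =
  fixes sp :: "(nat \<Rightarrow> nat) set \<Rightarrow> (nat \<Rightarrow> nat) \<Rightarrow> bool"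
  assumes span_generator: "\<And>X x. x \<in> X \<Longrightarrow> zero_one x \<Longrightarrow> sp X x"
    and span_trans: "\<And>X Y w. \<forall>x\<in>X. zero_one x \<Longrightarrow> spans_set sp X Y \<Longrightarrow> zero_one w
      \<Longrightarrow> sp Y w \<Longrightarrow> sp X w"
    and span_witness_below: "\<And>X X' y. \<forall>x\<in>X. zero_one x \<Longrightarrow> sp X y \<Longrightarrow> X' \<subseteq> X
      \<Longrightarrow> \<not> sp X' y \<Longrightarrow> \<exists>x\<in>X - X'. \<forall>i. x i \<le> y i"
begin

lemma spans_set_trans:
  assumes "\<forall>x\<in>X. zero_one x" "\<forall>w\<in>W. zero_one w"
    and "spans_set sp X Y" "spans_set sp Y W"
  shows "spans_set sp X W"
  using assms span_trans unfolding spans_set_def by blast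

lemma base_zero_one: "is_base sp n m A U \<Longrightarrow> \<forall>x\<in>U. zero_one x"
  unfolding is_base_def spanning_set_def zo_vec_def zero_one_def by blast

lemma base_element_not_spanned_by_rest:
  assumes bm: "binary_matrix n m A" and base: "is_base sp n m A U" and "u \<in> U"
  shows "\<not> sp (U - {u}) u"
proof
  assume u_spanned: "sp (U - {u}) u"
  have U01: "\<forall>x\<in>U. zero_one x"
    using base base_zero_one by blast
  have "spans_set sp (U - {u}) U"
    unfolding spans_set_def
  proof
    fix y assume "y \<in> U"
    then show "sp (U - {u}) y"
      using u_spanned U01 span_generator[of y "U - {u}"] by (cases "y = u") auto
  qed
  moreover have "spans_set sp U (columns n m A)"
    using base unfolding is_base_def spanning_set_def by blast
  moreover have "\<forall>x\<in>U - {u}. zero_one x" "\<forall>c\<in>columns n m A. zero_one c"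
    using U01 column_zero_one[OF bm] by blast+
  ultimately have "spans_set sp (U - {u}) (columns n m A)"
    using spans_set_trans by blast
  then have "spanning_set sp n m A (U - {u})"
    using base unfolding is_base_def spanning_set_def by blast
  then have "card U \<le> card (U - {u})"
    using base unfolding is_base_def by blast
  moreover have "finite U"
    using base unfolding is_base_def spanning_set_def by blast
  then have "card (U - {u}) < card U"
    using \<open>u \<in> U\<close> by (rule card_Diff1_less)
  ultimately show False by simp
qed

lemma mutual_span_contains_essential_element:
  assumes U01: "\<forall>x\<in>U. zero_one x" and V01: "\<forall>x\<in>V. zero_one x"
    and UV: "spans_set sp U V" and VU: "spans_set sp V U"
    and "u \<in> U" and essential: "\<not> sp (U - {u}) u"
  shows "u \<in> V"
proof -
  define V' where "V' = {v\<in>V. sp (U - {u}) v}"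
  have "\<not> sp V' u"
  proof
    assume "sp V' u"
    then have "sp (U - {u}) u"
      using span_trans[of "U - {u}" V' u] U01 \<open>u \<in> U\<close>
      unfolding V'_def spans_set_def by blast
    with essential show False ..
  qed
  moreover have "sp V u"
    using VU \<open>u \<in> U\<close> unfolding spans_set_def by blast
  ultimately obtain v where v: "v \<in> V" "\<not> sp (U - {u}) v" and v_le_u: "\<forall>i. v i \<le> u i"
    using span_witness_below[OF V01, of u V'] unfolding V'_def by blast
  have "sp U v"
    using UV v(1) unfolding spans_set_def by blast
  then obtain x where "x \<in> U - (U - {u})" and x_le_v: "\<forall>i. x i \<le> v i"
    using span_witness_below[OF U01, of v "U - {u}"] v(2) by blast
  then have "x = u" by blast
  with v_le_u x_le_v have "u = v"
    by (intro ext) (simp add: le_antisym)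
  with v(1) show ?thesis by simp
qed

lemma acyclic_base_graph:
  assumes bm: "binary_matrix n m A"
  shows "acyclic (base_graph sp n m A)"
proof -
  define S where "S = {(U, V). is_base sp n m A U \<and> is_base sp n m A V \<and> spans_set sp U V}"
  have "trans S"
  proof (rule transI)
    fix U V W assume "(U, V) \<in> S" "(V, W) \<in> S"
    then have bases: "is_base sp n m A U" "is_base sp n m A W"
      and spans: "spans_set sp U V" "spans_set sp V W"
      unfolding S_def by auto
    then have "spans_set sp U W"
      using spans_set_trans[OF base_zero_one[OF bases(1)] base_zero_one[OF bases(2)]] by blast
    with bases show "(U, W) \<in> S"
      unfolding S_def by blast
  qed
  moreover have "base_graph sp n m A \<subseteq> S"
    unfolding S_def base_graph_def by blast
  ultimately have closure_in_S: "(base_graph sp n m A)\<^sup>+ \<subseteq> S"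
    using trancl_mono trancl_id by blast
  show ?thesis
    unfolding acyclic_def
  proof (intro allI notI)
    fix U assume "(U, U) \<in> (base_graph sp n m A)\<^sup>+"
    then obtain V where edge: "(U, V) \<in> base_graph sp n m A"
      and return: "(V, U) \<in> (base_graph sp n m A)\<^sup>*"
      by (blast dest: tranclD)
    have bases: "is_base sp n m A U" "is_base sp n m A V" and "U \<noteq> V"
      and UV: "spans_set sp U V"
      using edge unfolding base_graph_def by auto
    have "(V, U) \<in> (base_graph sp n m A)\<^sup>+"
      using return \<open>U \<noteq> V\<close> by (simp add: rtrancl_eq_or_trancl)
    then have VU: "spans_set sp V U"
      using closure_in_S unfolding S_def by blast
    have "U \<subseteq> V" "V \<subseteq> U"
      using mutual_span_contains_essential_element[OF base_zero_one base_zero_one]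
        base_element_not_spanned_by_rest[OF bm] bases UV VU by blast+
    with \<open>U \<noteq> V\<close> show False by blast
  qed
qed

end

text \<open>Double counting: if the nested sum is at most 1, no element of the union is counted twice.\<close>
lemma sum_nested_eq_sum_Union:
  fixes g :: "'a \<Rightarrow> nat"
  assumes S: "finite S" and F: "\<forall>y\<in>S. finite (f y)"
    and g_le: "\<forall>x\<in>\<Union>(f ` S). g x \<le> 1"
    and total_le: "(\<Sum>y\<in>S. \<Sum>x\<in>f y. g x) \<le> 1"
  shows "(\<Sum>y\<in>S. \<Sum>x\<in>f y. g x) = (\<Sum>x\<in>\<Union>(f ` S). g x)"
proof -
  let ?mult = "\<lambda>x. card {y\<in>S. x \<in> f y}"
  have fin: "finite (\<Union>(f ` S))"
    using S F by blast
  have "(\<Sum>y\<in>S. \<Sum>x\<in>f y. g x) = (\<Sum>y\<in>S. \<Sum>x\<in>{x\<in>\<Union>(f ` S). x \<in> f y}. g x)"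
    by (intro sum.cong refl arg_cong[where f = "\<lambda>A. sum g A"]) blast
  also have "\<dots> = (\<Sum>x\<in>\<Union>(f ` S). \<Sum>y\<in>{y\<in>S. x \<in> f y}. g x)"
    by (rule sum.swap_restrict[OF S fin])
  also have "\<dots> = (\<Sum>x\<in>\<Union>(f ` S). ?mult x * g x)"
    by simp
  finally have nested: "(\<Sum>y\<in>S. \<Sum>x\<in>f y. g x) = (\<Sum>x\<in>\<Union>(f ` S). ?mult x * g x)" .
  have "?mult x * g x = g x" if x: "x \<in> \<Union>(f ` S)" for x
  proof -
    have "?mult x > 0"
      using x S by (auto simp: card_gt_0_iff)
    moreover have "?mult x * g x \<le> (\<Sum>x\<in>\<Union>(f ` S). ?mult x * g x)"
      by (rule member_le_sum[OF x _ fin]) simp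
    then have "?mult x * g x \<le> 1"
      using total_le nested by simp
    moreover have "g x = 0 \<or> g x = 1"
      using g_le x by fastforce
    ultimately show ?thesis
      by auto
  qed
  with nested show ?thesis by simp
qed

lemma span_operator_bin_spans: "span_operator bin_spans"
proof
  fix X x assume "x \<in> X" "zero_one x"
  then show "bin_spans X x"
    unfolding bin_spans_def by (intro exI[of _ "{x}"]) auto
next
  fix X Y w
  assume X01: "\<forall>x\<in>X. zero_one x" and XY: "spans_set bin_spans X Y"
    and w01: "zero_one w" and "bin_spans Y w"
  then obtain S where S: "S \<subseteq> Y" "finite S" and w: "w = (\<lambda>i. \<Sum>y\<in>S. y i)"
    unfolding bin_spans_def by blast
  have "\<forall>y\<in>S. \<exists>T\<subseteq>X. finite T \<and> y = (\<lambda>i. \<Sum>x\<in>T. x i)"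
    using XY S(1) unfolding spans_set_def bin_spans_def by blast
  then obtain f where f: "\<forall>y\<in>S. f y \<subseteq> X \<and> finite (f y) \<and> y = (\<lambda>i. \<Sum>x\<in>f y. x i)"
    by metis
  have fin_f: "\<forall>y\<in>S. finite (f y)" and sub_X: "\<Union>(f ` S) \<subseteq> X"
    using f by blast+
  have "w i = (\<Sum>x\<in>\<Union>(f ` S). x i)" for i
  proof -
    have "y i = (\<Sum>x\<in>f y. x i)" if "y \<in> S" for y
      using fun_cong[OF f[rule_format, OF that, THEN conjunct2, THEN conjunct2], of i] by simp
    then have nested: "w i = (\<Sum>y\<in>S. \<Sum>x\<in>f y. x i)"
      unfolding w by (rule sum.cong[OF refl])
    have "w i \<in> {0, 1}"
      using w01 unfolding zero_one_def by blast
    then have "w i \<le> 1"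
      by auto
    have terms_le: "\<forall>x\<in>\<Union>(f ` S). x i \<le> 1"
    proof
      fix x assume "x \<in> \<Union>(f ` S)"
      then have "x i \<in> {0, 1}"
        using X01 sub_X unfolding zero_one_def by blast
      then show "x i \<le> 1"
        by auto
    qed
    from \<open>w i \<le> 1\<close> have "(\<Sum>y\<in>S. \<Sum>x\<in>f y. x i) \<le> 1"
      unfolding nested .
    with nested show ?thesis
      using sum_nested_eq_sum_Union[OF S(2) fin_f terms_le] by argo
  qed
  moreover have "finite (\<Union>(f ` S))"
    using S(2) fin_f by blast
  ultimately show "bin_spans X w"
    unfolding bin_spans_def using sub_X by blast
next
  fix X X' y
  assume "bin_spans X y" and not_spanned: "\<not> bin_spans X' y"
  then obtain S where S: "S \<subseteq> X" "finite S" and y: "y = (\<lambda>i. \<Sum>x\<in>S. x i)"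
    unfolding bin_spans_def by blast
  have "\<not> S \<subseteq> X'"
    using not_spanned S(2) y unfolding bin_spans_def by blast
  then obtain x where "x \<in> S" "x \<notin> X'" by blast
  moreover have "\<forall>i. x i \<le> y i"
    unfolding y using member_le_sum[OF \<open>x \<in> S\<close> _ S(2), of "\<lambda>x. x _"] by simp
  ultimately show "\<exists>x\<in>X - X'. \<forall>i. x i \<le> y i"
    using S(1) by blast
qed

lemma span_operator_bool_spans: "span_operator bool_spans"
proof
  fix X x assume "x \<in> X" "zero_one x"
  moreover have "x = (\<lambda>i. if (\<exists>y\<in>{x}. y i = 1) then 1 else 0)"
  proof
    fix i
    have "x i \<in> {0, 1}"
      using \<open>zero_one x\<close> unfolding zero_one_def by blast
    then show "x i = (if (\<exists>y\<in>{x}. y i = 1) then 1 else 0)"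
      by auto
  qed
  ultimately show "bool_spans X x"
    unfolding bool_spans_def by blast
next
  fix X Y w
  assume XY: "spans_set bool_spans X Y" and "bool_spans Y w"
  then obtain S where S: "S \<subseteq> Y" "finite S"
    and w: "w = (\<lambda>i. if (\<exists>y\<in>S. y i = 1) then 1 else 0)"
    unfolding bool_spans_def by blast
  have "\<forall>y\<in>S. \<exists>T\<subseteq>X. finite T \<and> y = (\<lambda>i. if (\<exists>x\<in>T. x i = 1) then 1 else 0)"
    using XY S(1) unfolding spans_set_def bool_spans_def by blast
  then obtain f where f: "\<forall>y\<in>S. f y \<subseteq> X \<and> finite (f y)
      \<and> y = (\<lambda>i. if (\<exists>x\<in>f y. x i = 1) then 1 else 0)"
    by metis
  have fin_f: "\<forall>y\<in>S. finite (f y)" and sub_X: "\<Union>(f ` S) \<subseteq> X"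
    using f by blast+
  have "(\<exists>y\<in>S. y i = 1) \<longleftrightarrow> (\<exists>x\<in>\<Union>(f ` S). x i = 1)" for i
  proof -
    have "y i = 1 \<longleftrightarrow> (\<exists>x\<in>f y. x i = 1)" if "y \<in> S" for y
      using fun_cong[OF f[rule_format, OF that, THEN conjunct2, THEN conjunct2], of i] by simp
    then show ?thesis
      by blast
  qed
  then have "w = (\<lambda>i. if (\<exists>x\<in>\<Union>(f ` S). x i = 1) then 1 else 0)"
    unfolding w by simp
  moreover have "finite (\<Union>(f ` S))"
    using S(2) fin_f by blast
  ultimately show "bool_spans X w"
    unfolding bool_spans_def using sub_X by blast
next
  fix X X' y
  assume X01: "\<forall>x\<in>X. zero_one x" and "bool_spans X y" and not_spanned: "\<not> bool_spans X' y"
  then obtain S where S: "S \<subseteq> X" "finite S"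
    and y: "y = (\<lambda>i. if (\<exists>x\<in>S. x i = 1) then 1 else 0)"
    unfolding bool_spans_def by blast
  have "\<not> S \<subseteq> X'"
    using not_spanned S(2) y unfolding bool_spans_def by blast
  then obtain x where "x \<in> S" "x \<notin> X'" by blast
  moreover have "x i \<le> y i" for i
  proof -
    have "x i \<in> {0, 1}"
      using X01 S(1) \<open>x \<in> S\<close> unfolding zero_one_def by blast
    then show ?thesis
      unfolding y using \<open>x \<in> S\<close> by auto
  qed
  ultimately show "\<exists>x\<in>X - X'. \<forall>i. x i \<le> y i"
    using S(1) by blast
qed

theorem mainTheorem16:
  fixes n m :: nat and A :: "nat \<Rightarrow> nat \<Rightarrow> nat"
  assumes "binary_matrix n m A"
  shows "acyclic (base_graph bin_spans n m A) \<and> acyclic (base_graph bool_spans n m A)"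
  using span_operator.acyclic_base_graph[OF span_operator_bin_spans assms]
    span_operator.acyclic_base_graph[OF span_operator_bool_spans assms] by blast

end
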